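(* Under the standing setup with assumptions (A1)–(A4), suppose the claims $X_n^k$ are bounded (no boundedness assumed for $D_n^k,R_n^k$) and $r\le m\mu$, and let $\theta$ be a solution of $\int_\theta^bx\,\mathrm dF(x)=r/m$. Suppose that there is $t_0$ such that for all $t\ge t_0$ and all $v\ge0$, $$\mathrm P\big[M(D_0(t),(X_0^k)_{k=1}^{D_0(t)},R_0(t))\ge v\big]\le\mathrm P\big[M(D_0(t+1),(X_0^k)_{k=1}^{D_0(t+1)},R_0(t+1))\ge v\big].$$ Then $m(1-F(\theta))>1$ implies $q_S<1$.
   Context: Standing setup. On a probability space $(\Omega,\mathcal F,\mathrm P)$ there are three mutually independent double arrays $(D_n^k)_{n\ge0,k\ge1}$, $(X_n^k)_{n\ge0,k\ge1}$, $(R_n^k)_{n\ge0,k\ge1}$, each consisting of i.i.d. random variables: $D_n^k\in\{0,1,2,\dots\}$ with law $p_j=\mathrm P[D_n^k=j]$ and mean $m$; $X_n^k\ge0$ real-valued with continuous distribution function $F$ and mean $\mu$; $R_n^k\ge0$ real-valued with mean $r$. Standing assumptions: (A1) $1<m<\infty$, $r<\infty$, $0<\mu<\infty$; (A2) $p_0>0$ and $p_k>0$ for some $k\ge2$; (A3) for the process under consideration started at $1$, every finite positive state is reached with positive probability; (A4) $D_n^k,X_n^k,R_n^k$ have finite variances. $b$ denotes the supremum of the support of $F$. Write $D_n(k)=\sum_{j=1}^kD_n^j$, $R_n(k)=\sum_{j=1}^kR_n^j$. For $(x_k)_{k=1}^t$ let $x_{1,t}\le\dots\le x_{t,t}$ be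 its order statistics. The strongest-first counting function is $M(0,\varnothing,s)=0$ and, for $t\ge1$, $M(t,(x_k)_{k=1}^t,s)=0$ if $x_{t,t}>s$, otherwise $\max\{1\le k\le t:\sum_{j=t-k+1}^tx_{j,t}\le s\}$. The sf-process is $S_0=1$, $S_{n+1}=M\big(D_n(S_n),(X_n^k)_{k=1}^{D_n(S_n)},R_n(S_n)\big)$, and $q_S=\mathrm P[\lim_nS_n=0\mid S_0=1]$. *)

theory Defs
  imports "HOL-Probability.Probability"
begin

text \<open>The finite sequence (x_k)_{k=1}^t is given by a function x on indices 1..t.
  sfsorted t x is the list x_{1,t} <= ... <= x_{t,t} of order statistics;
  the sum of the k largest order statistics is the sum of its last k entries.\<close>

definition sfsorted :: "nat \<Rightarrow> (nat \<Rightarrow> real) \<Rightarrow> real list" where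
  "sfsorted t x = sort (map x [1..<t+1])"

definition sfM :: "nat \<Rightarrow> (nat \<Rightarrow> real) \<Rightarrow> real \<Rightarrow> nat" where
  "sfM t x s =
     (if t = 0 then 0
      else if last (sfsorted t x) > s then 0
      else Max {k \<in> {1..t}. sum_list (drop (t - k) (sfsorted t x)) \<le> s})"

definition Dsum :: "(nat \<Rightarrow> nat \<Rightarrow> 'a \<Rightarrow> nat) \<Rightarrow> nat \<Rightarrow> nat \<Rightarrow> 'a \<Rightarrow> nat" where
  "Dsum D n k \<omega> = (\<Sum>j=1..k. D n j \<omega>)"

definition Rsum :: "(nat \<Rightarrow> nat \<Rightarrow> 'a \<Rightarrow> real) \<Rightarrow> nat \<Rightarrow> nat \<Rightarrow> 'a \<Rightarrow> real" where
  "Rsum R n k \<omega> = (\<Sum>j=1..k. R n j \<omega>)"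

primrec sfS :: "(nat \<Rightarrow> nat \<Rightarrow> 'a \<Rightarrow> nat) \<Rightarrow> (nat \<Rightarrow> nat \<Rightarrow> 'a \<Rightarrow> real) \<Rightarrow>
    (nat \<Rightarrow> nat \<Rightarrow> 'a \<Rightarrow> real) \<Rightarrow> nat \<Rightarrow> 'a \<Rightarrow> nat" where
  "sfS D X R 0 \<omega> = 1"
| "sfS D X R (Suc n) \<omega> =
     sfM (Dsum D n (sfS D X R n \<omega>) \<omega>) (\<lambda>k. X n k \<omega>) (Rsum R n (sfS D X R n \<omega>) \<omega>)"

text \<open>All variables of the three arrays together, as one real-valued family indexed by
  (array tag, n, k) with tag 0 = D, 1 = X, 2 = R.\<close>
definition allvars :: "(nat \<Rightarrow> nat \<Rightarrow> 'a \<Rightarrow> nat) \<Rightarrow> (nat \<Rightarrow> nat \<Rightarrow> 'a \<Rightarrow> real) \<Rightarrow>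
    (nat \<Rightarrow> nat \<Rightarrow> 'a \<Rightarrow> real) \<Rightarrow> nat \<times> nat \<times> nat \<Rightarrow> 'a \<Rightarrow> real" where
  "allvars D X R i \<omega> = (case i of (c, n, k) \<Rightarrow>
      (if c = 0 then real (D n k \<omega>) else if c = 1 then X n k \<omega> else R n k \<omega>))"

definition allidx :: "(nat \<times> nat \<times> nat) set" where
  "allidx = {0, 1, 2} \<times> UNIV \<times> {1..}"

definition cdf_support :: "(real \<Rightarrow> real) \<Rightarrow> real set" where
  "cdf_support F = {x. \<forall>e>0. F (x + e) - F (x - e) > 0}"

end

theory Submission
  imports Defs
begin

text \<open>Fix a threshold \<open>\<theta>1\<close> slightly above \<open>\<theta>\<close> such that still \<open>m (1 - F \<theta>1) > 1\<close>, while
  \<open>m E[X; X > \<theta>1] < r\<close>; this is possible because \<open>F\<close> is continuous and \<open>\<integral>\<^sub>\<theta>\<^sup>b x dF = r / m\<close>.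
  By Chebyshev's inequality a generation of \<open>t\<close> individuals is typical with probability at least
  \<open>1 - C / t\<close>: it has about \<open>m t\<close> offspring, about \<open>m t (1 - F \<theta>1)\<close> of their claims exceed \<open>\<theta>1\<close>,
  and these claims fit into the reserve \<open>R(t)\<close>, so all of them are paid. The next generation then
  has at least \<open>\<rho> t - 1\<close> individuals with \<open>\<rho> > 1\<close>. Atypical generations are independent of the
  past, so along the geometric path \<open>j \<kappa>\<^sup>k\<close> their probabilities sum to less than one once \<open>j\<close> is
  large; by (A3) such a \<open>j\<close> is reached with positive probability, and from there the process
  grows geometrically with positive probability.\<close>

section \<open>The strongest-first counting function\<close>

definition topsum :: "nat \<Rightarrow> real list \<Rightarrow> real" where
  "topsum k xs = sum_list (drop (length xs - k) (sort xs))"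

lemma sum_list_map_sort:
  "sum_list (map f (sort xs)) = sum_list (map (f :: 'a::linorder \<Rightarrow> 'b::comm_monoid_add) xs)"
  by (metis mset_map mset_sort sum_mset_sum_list)

lemma sum_list_map_minus_const: "sum_list (map (\<lambda>y. y - c) ys) = sum_list ys - real (length ys) * c"
  by (simp add: sum_list_subtractf sum_list_triv)

lemma sum_list_upt_Suc_conv_sum: "sum_list (map f [a..<Suc t]) = (\<Sum>l=a..t. f l :: real)"
proof -
  have "set [a..<Suc t] = {a..t}" by auto
  then show ?thesis by (metis distinct_upt sum_list_distinct_conv_sum_set)
qed

lemma topsum_le:
  assumes "k \<le> length xs"
  shows "topsum k xs \<le> real k * c + sum_list (map (\<lambda>x. max 0 (x - c)) xs)"
proof -
  define ys where "ys = sort xs"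
  define n where "n = length xs - k"
  have "length (drop n ys) = k" using assms by (simp add: n_def ys_def)
  then have "sum_list (drop n ys) = real k * c + sum_list (map (\<lambda>y. y - c) (drop n ys))"
    by (simp add: sum_list_map_minus_const)
  also have "\<dots> \<le> real k * c + sum_list (map (\<lambda>y. max 0 (y - c)) (drop n ys))"
    by (intro add_left_mono sum_list_mono) auto
  also have "\<dots> \<le> real k * c + sum_list (map (\<lambda>y. max 0 (y - c)) ys)"
  proof -
    have "sum_list (map (\<lambda>y. max 0 (y - c)) ys) = sum_list (map (\<lambda>y. max 0 (y - c)) (take n ys))
        + sum_list (map (\<lambda>y. max 0 (y - c)) (drop n ys))"
      by (metis append_take_drop_id map_append sum_list_append)
    moreover have "0 \<le> sum_list (map (\<lambda>y. max 0 (y - c)) (take n ys))" by (rule sum_list_nonneg) auto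
    ultimately show ?thesis by simp
  qed
  also have "\<dots> = real k * c + sum_list (map (\<lambda>y. max 0 (y - c)) xs)"
    by (simp add: ys_def sum_list_map_sort)
  finally show ?thesis unfolding topsum_def ys_def n_def .
qed

lemma topsum_attained:
  assumes "1 \<le> k" "k \<le> length xs"
  shows "\<exists>c\<in>set xs. topsum k xs = real k * c + sum_list (map (\<lambda>x. max 0 (x - c)) xs)"
proof -
  define ys where "ys = sort xs"
  define n where "n = length xs - k"
  have n: "n < length ys" using assms by (simp add: n_def ys_def)
  define c where "c = ys ! n"
  have sorted: "sorted ys" by (simp add: ys_def)
  have low: "y \<le> c" if "y \<in> set (take n ys)" for y
    using that n sorted by (auto simp: in_set_conv_nth c_def sorted_iff_nth_mono)
  have high: "c \<le> y" if "y \<in> set (drop n ys)" for y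
    using that n sorted by (auto simp: in_set_conv_nth c_def sorted_iff_nth_mono)
  have "sum_list (map (\<lambda>y. max 0 (y - c)) xs)
      = sum_list (map (\<lambda>y. max 0 (y - c)) (take n ys)) + sum_list (map (\<lambda>y. max 0 (y - c)) (drop n ys))"
    by (simp flip: sum_list_append map_append add: ys_def sum_list_map_sort)
  also have "map (\<lambda>y. max 0 (y - c)) (take n ys) = map (\<lambda>_. 0) (take n ys)"
    using low by (intro map_cong) auto
  also have "sum_list (map (\<lambda>y. max 0 (y - c)) (drop n ys)) = sum_list (map (\<lambda>y. y - c) (drop n ys))"
    using high by (intro arg_cong[where f=sum_list] map_cong) auto
  also have "\<dots> = sum_list (drop n ys) - real k * c"
    using assms by (simp add: sum_list_map_minus_const n_def ys_def)
  finally have "topsum k xs = real k * c + sum_list (map (\<lambda>y. max 0 (y - c)) xs)"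
    by (simp add: topsum_def ys_def n_def)
  moreover have "c \<in> set xs" using n by (metis c_def ys_def length_sort nth_mem set_sort)
  ultimately show ?thesis by blast
qed

lemma topsum_le_iff:
  assumes "1 \<le> k" "k \<le> length xs"
  shows "topsum k xs \<le> s \<longleftrightarrow> (\<exists>c\<in>set xs. real k * c + sum_list (map (\<lambda>x. max 0 (x - c)) xs) \<le> s)"
  using topsum_attained[OF assms] topsum_le[OF assms(2)] by (metis order_trans)

text \<open>By \<open>topsum_le_iff\<close>, the sum of the \<open>k\<close> largest claims is the minimum over the claims \<open>c\<close>
  of \<open>k c + \<Sum>(x - c)\<^sup>+\<close>; this turns ``the \<open>k\<close> largest claims fit into the budget \<open>s\<close>''
  into a finite disjunction of measurable conditions.\<close>

definition top_claims_fit :: "nat \<Rightarrow> (nat \<Rightarrow> real) \<Rightarrow> real \<Rightarrow> nat \<Rightarrow> bool" where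
  "top_claims_fit t x s k \<longleftrightarrow> (\<exists>i\<in>{1..t}. real k * x i + (\<Sum>l=1..t. max 0 (x l - x i)) \<le> s)"

lemma top_claims_fit_iff:
  assumes "1 \<le> k" "k \<le> t"
  shows "top_claims_fit t x s k \<longleftrightarrow> topsum k (map x [1..<Suc t]) \<le> s"
  using assms
  by (simp del: upt_Suc add: topsum_le_iff top_claims_fit_def map_map o_def sum_list_upt_Suc_conv_sum
      atLeastLessThanSuc_atLeastAtMost)

lemma drop_length_minus_1: "ys \<noteq> [] \<Longrightarrow> drop (length ys - 1) ys = [last ys]"
  by (induction ys rule: rev_induct) auto

lemma le_sfM_iff:
  assumes j: "1 \<le> j"
  shows "j \<le> sfM t x s \<longleftrightarrow> 1 \<le> t \<and> top_claims_fit t x s 1 \<and> (\<exists>k\<in>{j..t}. top_claims_fit t x s k)"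
proof (cases "t = 0")
  case True
  then show ?thesis using j by (simp add: sfM_def)
next
  case t: False
  have len: "length (sfsorted t x) = t" by (simp add: sfsorted_def)
  have topsum: "sum_list (drop (t - k) (sfsorted t x)) = topsum k (map x [1..<Suc t])" for k
    by (simp add: topsum_def sfsorted_def)
  have fit: "top_claims_fit t x s k \<longleftrightarrow> sum_list (drop (t - k) (sfsorted t x)) \<le> s"
    if "1 \<le> k" "k \<le> t" for k
    using top_claims_fit_iff[OF that] topsum by simp
  have "sfsorted t x \<noteq> []" using len t by auto
  then have "drop (t - 1) (sfsorted t x) = [last (sfsorted t x)]"
    using drop_length_minus_1 len by metis
  then have "last (sfsorted t x) = sum_list (drop (t - 1) (sfsorted t x))" by simp
  then have last: "s < last (sfsorted t x) \<longleftrightarrow> \<not> top_claims_fit t x s 1"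
    using fit[of 1] t by auto
  define K where "K = {k \<in> {1..t}. sum_list (drop (t - k) (sfsorted t x)) \<le> s}"
  show ?thesis
  proof (cases "top_claims_fit t x s 1")
    case False
    then show ?thesis using t last j by (simp add: sfM_def)
  next
    case True
    have "1 \<in> K" using True t fit[of 1] by (simp add: K_def)
    then have "j \<le> Max K \<longleftrightarrow> (\<exists>k\<in>K. j \<le> k)" by (subst Max_ge_iff) (auto simp: K_def)
    also have "\<dots> \<longleftrightarrow> (\<exists>k\<in>{j..t}. top_claims_fit t x s k)"
    proof
      assume "\<exists>k\<in>K. j \<le> k"
      then obtain k where "k \<in> K" "j \<le> k" by blast
      then show "\<exists>k\<in>{j..t}. top_claims_fit t x s k" using fit[of k] by (auto simp: K_def)
    next
      assume "\<exists>k\<in>{j..t}. top_claims_fit t x s k"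
      then obtain k where "k \<in> {j..t}" "top_claims_fit t x s k" by blast
      then have "k \<in> K" using fit[of k] j by (auto simp: K_def)
      then show "\<exists>k\<in>K. j \<le> k" using \<open>k \<in> {j..t}\<close> by auto
    qed
    finally show ?thesis using True t last by (simp add: sfM_def K_def)
  qed
qed

lemma card_claims_above_le_sfM:
  assumes c: "0 \<le> c" and G: "G = {i\<in>{1..t}. c < x i}" and "G \<noteq> {}"
    and budget: "(\<Sum>i\<in>G. x i) \<le> s"
  shows "card G \<le> sfM t x s"
proof -
  define N where "N = card G"
  have "N \<le> card {1..t}" unfolding N_def G by (intro card_mono) auto
  then have Nt: "N \<le> t" by simp
  have N1: "1 \<le> N" using \<open>G \<noteq> {}\<close> by (simp add: N_def G Suc_le_eq card_gt_0_iff)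
  have excess: "(\<Sum>l=1..t. max 0 (x l - c)) = sum x G - real N * c"
  proof -
    have "(\<Sum>l=1..t. max 0 (x l - c)) = (\<Sum>l=1..t. if c < x l then x l - c else 0)"
      by (intro sum.cong) auto
    also have "\<dots> = (\<Sum>l\<in>G. x l - c)" unfolding G by (rule sum.inter_filter[symmetric]) simp
    finally show ?thesis by (simp add: sum_subtractf N_def)
  qed
  have bound: "topsum k (map x [1..<Suc t]) \<le> real k * c + sum x G - real N * c" if "k \<le> t" for k
    using topsum_le[of k "map x [1..<Suc t]" c] that excess
    by (simp del: upt_Suc add: map_map o_def sum_list_upt_Suc_conv_sum)
  have "c \<le> real N * c" using mult_right_mono[of 1 "real N" c] c N1 by simp
  then have "topsum 1 (map x [1..<Suc t]) \<le> s" using bound[of 1] N1 Nt budget by simp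
  moreover have "topsum N (map x [1..<Suc t]) \<le> s" using bound[OF Nt] budget by simp
  ultimately have "top_claims_fit t x s 1" "top_claims_fit t x s N"
    using top_claims_fit_iff[of 1 t x s] top_claims_fit_iff[OF N1 Nt] N1 Nt by (simp_all del: upt_Suc)
  then show ?thesis using le_sfM_iff[OF N1, of t x s] N1 Nt unfolding N_def by auto
qed

lemma measurable_sfM:
  assumes [measurable]: "\<And>k. x k \<in> borel_measurable N" "s \<in> borel_measurable N"
  shows "(\<lambda>\<omega>. sfM t (\<lambda>k. x k \<omega>) (s \<omega>)) \<in> measurable N (count_space UNIV)"
proof -
  define P where "P j \<omega> \<longleftrightarrow> 1 \<le> t \<and> top_claims_fit t (\<lambda>k. x k \<omega>) (s \<omega>) 1
      \<and> (\<exists>k\<in>{j..t}. top_claims_fit t (\<lambda>k. x k \<omega>) (s \<omega>) k)" for j \<omega>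
  have P[measurable]: "{\<omega>\<in>space N. P j \<omega>} \<in> sets N" for j
    unfolding P_def top_claims_fit_def by measurable
  have ge: "j \<le> sfM t (\<lambda>k. x k \<omega>) (s \<omega>) \<longleftrightarrow> P j \<omega>" if "1 \<le> j" for j \<omega>
    unfolding P_def using that by (rule le_sfM_iff)
  have "{\<omega>\<in>space N. sfM t (\<lambda>k. x k \<omega>) (s \<omega>) = j} \<in> sets N" for j
  proof (cases "j = 0")
    case True
    have "sfM t (\<lambda>k. x k \<omega>) (s \<omega>) = 0 \<longleftrightarrow> \<not> P 1 \<omega>" for \<omega>
      using ge[OF order_refl, of \<omega>] by linarith
    then have "{\<omega>\<in>space N. sfM t (\<lambda>k. x k \<omega>) (s \<omega>) = j} = space N - {\<omega>\<in>space N. P 1 \<omega>}"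
      using True by auto
    then show ?thesis by auto
  next
    case False
    have "sfM t (\<lambda>k. x k \<omega>) (s \<omega>) = j \<longleftrightarrow> P j \<omega> \<and> \<not> P (Suc j) \<omega>" for \<omega>
      using ge[of j \<omega>] ge[of "Suc j" \<omega>] False by linarith
    then have "{\<omega>\<in>space N. sfM t (\<lambda>k. x k \<omega>) (s \<omega>) = j}
        = {\<omega>\<in>space N. P j \<omega>} - {\<omega>\<in>space N. P (Suc j) \<omega>}"
      by auto
    then show ?thesis by auto
  qed
  then show ?thesis by (simp add: measurable_count_space_eq2_countable vimage_def Int_def conj_commute)
qed

section \<open>Measurability and locality of the process\<close>

lemma measurable_Dsum:
  assumes "\<And>k. D n k \<in> measurable N (count_space UNIV)"
  shows "Dsum D n t \<in> measurable N (count_space UNIV)"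
proof (induction t)
  case 0
  then show ?case by (simp add: Dsum_def)
next
  case (Suc t)
  have "Dsum D n (Suc t) = (\<lambda>\<omega>. (\<lambda>i \<omega>. i + D n (Suc t) \<omega>) (Dsum D n t \<omega>) \<omega>)"
    by (auto simp: Dsum_def)
  also have "\<dots> \<in> measurable N (count_space UNIV)"
  proof (rule measurable_compose_countable[OF _ Suc])
    show "(\<lambda>\<omega>. i + D n (Suc t) \<omega>) \<in> measurable N (count_space UNIV)" for i
      using measurable_compose[OF assms, of "\<lambda>x. i + x"] by simp
  qed
  finally show ?case .
qed

lemma measurable_sfS:
  assumes D: "\<And>n k. D n k \<in> measurable N (count_space UNIV)"
    and X[measurable]: "\<And>n k. X n k \<in> borel_measurable N"
    and R[measurable]: "\<And>n k. R n k \<in> borel_measurable N"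
  shows "sfS D X R n \<in> measurable N (count_space UNIV)"
proof (induction n)
  case 0
  then show ?case by simp
next
  case (Suc n)
  have Rsum[measurable]: "Rsum R n t \<in> borel_measurable N" for t
    unfolding Rsum_def by measurable
  have "(\<lambda>\<omega>. sfM u (\<lambda>k. X n k \<omega>) (Rsum R n t \<omega>)) \<in> measurable N (count_space UNIV)" for u t
    by (rule measurable_sfM) measurable
  then have "(\<lambda>\<omega>. sfM (Dsum D n t \<omega>) (\<lambda>k. X n k \<omega>) (Rsum R n t \<omega>)) \<in> measurable N (count_space UNIV)"
    for t
    by (rule measurable_compose_countable[OF _ measurable_Dsum[OF D]])
  then have "(\<lambda>\<omega>. (\<lambda>t \<omega>. sfM (Dsum D n t \<omega>) (\<lambda>k. X n k \<omega>) (Rsum R n t \<omega>)) (sfS D X R n \<omega>) \<omega>)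
      \<in> measurable N (count_space UNIV)"
    by (rule measurable_compose_countable[OF _ Suc])
  then show ?case by simp
qed

lemma sfM_cong:
  assumes "\<And>k. 1 \<le> k \<Longrightarrow> k \<le> t \<Longrightarrow> x k = y k"
  shows "sfM t x s = sfM t y s"
proof -
  have "map x [1..<t+1] = map y [1..<t+1]" using assms by (intro map_cong) auto
  then show ?thesis by (simp only: sfM_def sfsorted_def)
qed

lemma sfS_cong:
  assumes "\<And>l k. l < n \<Longrightarrow> 1 \<le> k \<Longrightarrow> D l k \<omega> = D' l k \<omega>'"
    and "\<And>l k. l < n \<Longrightarrow> 1 \<le> k \<Longrightarrow> X l k \<omega> = X' l k \<omega>'"
    and "\<And>l k. l < n \<Longrightarrow> 1 \<le> k \<Longrightarrow> R l k \<omega> = R' l k \<omega>'"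
  shows "sfS D X R n \<omega> = sfS D' X' R' n \<omega>'"
  using assms
proof (induction n)
  case 0
  then show ?case by simp
next
  case (Suc n)
  have IH: "sfS D X R n \<omega> = sfS D' X' R' n \<omega>'" using Suc by auto
  define t where "t = sfS D X R n \<omega>"
  have "Dsum D n t \<omega> = Dsum D' n t \<omega>'" unfolding Dsum_def using Suc.prems(1) by (intro sum.cong) auto
  moreover have "Rsum R n t \<omega> = Rsum R' n t \<omega>'" unfolding Rsum_def using Suc.prems(3) by (intro sum.cong) auto
  moreover have "sfM u (\<lambda>k. X n k \<omega>) s = sfM u (\<lambda>k. X' n k \<omega>') s" for u s
    using Suc.prems(2) by (intro sfM_cong) auto
  ultimately show ?case using IH by (simp add: t_def[symmetric])
qed

text \<open>A sample of the process is a valuation of the index set \<open>allidx\<close>; by \<open>sfS_cong\<close>,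
  the first \<open>n\<close> generations only read the coordinates in \<open>idx_before n\<close>.\<close>

definition idx_before :: "nat \<Rightarrow> (nat \<times> nat \<times> nat) set" where
  "idx_before n = {i \<in> allidx. fst (snd i) < n}"

definition idx_at :: "nat \<Rightarrow> (nat \<times> nat \<times> nat) set" where
  "idx_at n = {i \<in> allidx. fst (snd i) = n}"

definition Dcoord :: "nat \<Rightarrow> nat \<Rightarrow> (nat \<times> nat \<times> nat \<Rightarrow> real) \<Rightarrow> nat" where
  "Dcoord l k v = nat \<lfloor>v (0, l, k)\<rfloor>"

definition Xcoord :: "nat \<Rightarrow> nat \<Rightarrow> (nat \<times> nat \<times> nat \<Rightarrow> real) \<Rightarrow> real" where
  "Xcoord l k v = v (1, l, k)"

definition Rcoord :: "nat \<Rightarrow> nat \<Rightarrow> (nat \<times> nat \<times> nat \<Rightarrow> real) \<Rightarrow> real" where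
  "Rcoord l k v = v (2, l, k)"

lemma measurable_PiM_coordinate: "(\<lambda>v. v i) \<in> borel_measurable (PiM K (\<lambda>_. borel))"
proof (cases "i \<in> K")
  case True
  then show ?thesis by measurable
next
  case False
  have "(\<lambda>v. undefined) \<in> borel_measurable (PiM K (\<lambda>_. borel))" by simp
  then show ?thesis
    by (rule measurable_cong[THEN iffD1, rotated]) (use False in \<open>auto simp: space_PiM PiE_def extensional_def\<close>)
qed

lemma measurable_sfS_coord:
  "sfS Dcoord Xcoord Rcoord n \<in> measurable (PiM K (\<lambda>_. borel)) (count_space UNIV)"
proof -
  note measurable_PiM_coordinate[measurable]
  show ?thesis by (rule measurable_sfS) (unfold Dcoord_def Xcoord_def Rcoord_def, measurable)
qed

lemma sfS_eq_sfS_coord: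
  assumes "n \<le> n'"
  shows "sfS D X R n \<omega> = sfS Dcoord Xcoord Rcoord n (restrict (\<lambda>i. allvars D X R i \<omega>) (idx_before n'))"
  by (rule sfS_cong)
    (use assms in \<open>auto simp: Dcoord_def Xcoord_def Rcoord_def allvars_def idx_before_def allidx_def\<close>)

section \<open>Growth unless rare independent failures occur\<close>

lemma (in finite_measure) measure_UN_le_suminf:
  assumes "range A \<subseteq> sets M" "\<And>i. measure M (A i) \<le> f i" "summable f"
  shows "measure M (\<Union>i. A i) \<le> (\<Sum>i. f i)"
proof -
  have summable: "summable (\<lambda>i. measure M (A i))"
    by (rule summable_comparison_test'[OF assms(3)]) (use assms(2) in auto)
  with assms(1) have "measure M (\<Union>i. A i) \<le> (\<Sum>i. measure M (A i))"
    by (rule finite_measure_subadditive_countably)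
  also have "\<dots> \<le> (\<Sum>i. f i)"
    using assms(2) summable assms(3) by (rule suminf_le)
  finally show ?thesis .
qed

locale rare_failure_growth = prob_space +
  fixes S :: "nat \<Rightarrow> 'a \<Rightarrow> nat" and fail :: "nat \<Rightarrow> nat \<Rightarrow> 'a set"
    and C \<kappa> :: real and T :: nat
  assumes measurable_S[measurable]: "\<And>n. S n \<in> measurable M (count_space UNIV)"
    and sets_fail[measurable]: "\<And>n t. fail n t \<in> sets M"
    and prob_fail_le: "\<And>n t. 1 \<le> t \<Longrightarrow> prob (fail n t) \<le> C / real t"
    and fail_indep: "\<And>n0 n j t. n0 \<le> n \<Longrightarrow>
      prob ({\<omega>\<in>space M. S n0 \<omega> = j \<and> S n \<omega> = t} \<inter> fail n t)
      = prob {\<omega>\<in>space M. S n0 \<omega> = j \<and> S n \<omega> = t} * prob (fail n t)"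
    and growth: "\<And>n t \<omega>. \<omega> \<in> space M \<Longrightarrow> S n \<omega> = t \<Longrightarrow> T \<le> t \<Longrightarrow> \<omega> \<notin> fail n t \<Longrightarrow>
      \<kappa> * real t \<le> real (S (Suc n) \<omega>)"
    and growth_factor: "1 < \<kappa>"
begin

lemma C_nonneg: "0 \<le> C"
proof -
  have "prob (fail 0 1) \<le> C" using prob_fail_le[of 1 0] by simp
  then show ?thesis using measure_nonneg[of M "fail 0 1"] by linarith
qed

lemma prob_growth_fails_le:
  assumes "n0 \<le> n" "real T \<le> a" "0 < a"
  shows "prob {\<omega>\<in>space M. S n0 \<omega> = j \<and> a \<le> real (S n \<omega>) \<and> real (S (Suc n) \<omega>) < \<kappa> * a}
    \<le> C / a * prob {\<omega>\<in>space M. S n0 \<omega> = j}"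
proof -
  define Q where "Q t = {\<omega>\<in>space M. S n0 \<omega> = j \<and> S n \<omega> = t}" for t
  define W where "W t = (if a \<le> real t then Q t \<inter> fail n t else {})" for t
  have Q_sets[measurable]: "Q t \<in> sets M" for t
    unfolding Q_def by measurable
  have [measurable]: "W t \<in> sets M" for t
    by (auto simp: W_def)
  have Q_sums: "(\<lambda>t. prob (Q t)) sums prob (\<Union>t. Q t)"
    by (intro finite_measure_UNION) (auto simp: disjoint_family_on_def Q_def)
  have "{\<omega>\<in>space M. S n0 \<omega> = j \<and> a \<le> real (S n \<omega>) \<and> real (S (Suc n) \<omega>) < \<kappa> * a} \<subseteq> (\<Union>t. W t)"
  proof
    fix \<omega> assume "\<omega> \<in> {\<omega>\<in>space M. S n0 \<omega> = j \<and> a \<le> real (S n \<omega>) \<and> real (S (Suc n) \<omega>) < \<kappa> * a}"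
    then have \<omega>: "\<omega> \<in> space M" "a \<le> real (S n \<omega>)" "real (S (Suc n) \<omega>) < \<kappa> * a" "S n0 \<omega> = j"
      by auto
    have "\<kappa> * a \<le> \<kappa> * real (S n \<omega>)" using \<omega>(2) growth_factor by simp
    moreover have "T \<le> S n \<omega>" using \<omega>(2) assms(2) by linarith
    ultimately have "\<omega> \<in> fail n (S n \<omega>)" using growth[OF \<omega>(1) refl] \<omega>(3) by fastforce
    with \<omega> show "\<omega> \<in> (\<Union>t. W t)" by (auto simp: W_def Q_def)
  qed
  then have "prob {\<omega>\<in>space M. S n0 \<omega> = j \<and> a \<le> real (S n \<omega>) \<and> real (S (Suc n) \<omega>) < \<kappa> * a}
      \<le> prob (\<Union>t. W t)"
    by (intro finite_measure_mono) auto
  also have "\<dots> \<le> (\<Sum>t. prob (Q t) * (C / a))"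
  proof (rule measure_UN_le_suminf)
    show "summable (\<lambda>t. prob (Q t) * (C / a))"
      using Q_sums by (intro summable_mult2 sums_summable)
    show "prob (W t) \<le> prob (Q t) * (C / a)" for t
    proof (cases "a \<le> real t")
      case True
      then have "1 \<le> t" using \<open>0 < a\<close> by linarith
      have "prob (W t) = prob (Q t) * prob (fail n t)"
        using True fail_indep[OF assms(1)] by (simp add: W_def Q_def)
      also have "\<dots> \<le> prob (Q t) * (C / real t)"
        using prob_fail_le[OF \<open>1 \<le> t\<close>] by (intro mult_left_mono) auto
      also have "\<dots> \<le> prob (Q t) * (C / a)"
        using True assms(3) C_nonneg by (intro mult_left_mono divide_left_mono) auto
      finally show ?thesis .
    qed (use assms(3) C_nonneg in \<open>simp add: W_def\<close>)
  qed auto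
  also have "\<dots> = C / a * prob (\<Union>t. Q t)"
    using sums_mult2[OF Q_sums, of "C / a"] by (simp add: sums_iff mult.commute)
  also have "(\<Union>t. Q t) = {\<omega>\<in>space M. S n0 \<omega> = j}"
    by (auto simp: Q_def)
  finally show ?thesis .
qed

lemma prob_leaves_geometric_path_lt:
  assumes j: "T \<le> j" "C * \<kappa> / (\<kappa> - 1) < real j" and H: "0 < prob {\<omega>\<in>space M. S n0 \<omega> = j}"
  shows "prob (\<Union>k. {\<omega>\<in>space M. S n0 \<omega> = j \<and> real j * \<kappa> ^ k \<le> real (S (n0 + k) \<omega>)
      \<and> real (S (Suc (n0 + k)) \<omega>) < real j * \<kappa> ^ Suc k}) < prob {\<omega>\<in>space M. S n0 \<omega> = j}"
    (is "prob (\<Union>k. ?A k) < prob ?H")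
proof -
  have "0 \<le> C * \<kappa> / (\<kappa> - 1)" using C_nonneg growth_factor by simp
  then have "0 < real j" using j(2) by linarith
  have geometric: "(\<lambda>k. C / real j * prob ?H * (1 / \<kappa>) ^ k) sums (C / real j * prob ?H * (\<kappa> / (\<kappa> - 1)))"
    using sums_mult[OF geometric_sums[of "1 / \<kappa>"], of "C / real j * prob ?H"] growth_factor
    by (simp add: field_simps)
  have "prob (\<Union>k. ?A k) \<le> C / real j * prob ?H * (\<kappa> / (\<kappa> - 1))"
  proof (subst sums_unique[OF geometric], rule measure_UN_le_suminf)
    show "prob (?A k) \<le> C / real j * prob ?H * (1 / \<kappa>) ^ k" for k
    proof -
      have "real j \<le> real j * \<kappa> ^ k"
        using growth_factor \<open>0 < real j\<close> by (simp add: one_le_power)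
      moreover have "real T \<le> real j" using j(1) by simp
      ultimately have "real T \<le> real j * \<kappa> ^ k" by linarith
      then have "prob (?A k) \<le> C / (real j * \<kappa> ^ k) * prob ?H"
        using prob_growth_fails_le[of n0 "n0 + k" "real j * \<kappa> ^ k" j] j(1) \<open>0 < real j\<close> growth_factor
        by (simp add: mult_ac)
      also have "\<dots> = C / real j * prob ?H * (1 / \<kappa>) ^ k"
        by (simp add: power_one_over)
      finally show ?thesis .
    qed
  qed (use sums_summable[OF geometric] in auto)
  also have "\<dots> = C * \<kappa> / (\<kappa> - 1) / real j * prob ?H"
    by (simp add: mult_ac)
  also have "\<dots> < 1 * prob ?H"
    using j(2) \<open>0 < real j\<close> H by (intro mult_strict_right_mono) (simp_all only: divide_less_eq_1, simp)
  finally show ?thesis by simp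
qed

lemma prob_extinction_lt_1:
  assumes reach: "\<And>j. 1 \<le> j \<Longrightarrow> \<exists>n. 0 < prob {\<omega>\<in>space M. S n \<omega> = j}"
  shows "prob {\<omega>\<in>space M. (\<lambda>n. real (S n \<omega>)) \<longlonglongrightarrow> 0} < 1"
proof -
  define j where "j = max (max T 1) (nat \<lceil>C * \<kappa> / (\<kappa> - 1)\<rceil> + 1)"
  have j: "T \<le> j" "1 \<le> j" "C * \<kappa> / (\<kappa> - 1) < real j"
    unfolding j_def by linarith+
  obtain n0 where H: "0 < prob {\<omega>\<in>space M. S n0 \<omega> = j}" using reach[OF j(2)] by blast
  define A where "A k = {\<omega>\<in>space M. S n0 \<omega> = j \<and> real j * \<kappa> ^ k \<le> real (S (n0 + k) \<omega>)
    \<and> real (S (Suc (n0 + k)) \<omega>) < real j * \<kappa> ^ Suc k}" for k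
  define G where "G = {\<omega>\<in>space M. S n0 \<omega> = j \<and> (\<forall>k. real j * \<kappa> ^ k \<le> real (S (n0 + k) \<omega>))}"
  have [measurable]: "G \<in> sets M" "A k \<in> sets M" for k
    unfolding G_def A_def by measurable
  have "{\<omega>\<in>space M. S n0 \<omega> = j} - G \<subseteq> (\<Union>k. A k)"
  proof
    fix \<omega> assume "\<omega> \<in> {\<omega>\<in>space M. S n0 \<omega> = j} - G"
    then obtain k where "\<not> real j * \<kappa> ^ k \<le> real (S (n0 + k) \<omega>)" and \<omega>: "\<omega> \<in> space M" "S n0 \<omega> = j"
      by (auto simp: G_def)
    moreover have "real j * \<kappa> ^ 0 \<le> real (S (n0 + 0) \<omega>)" using \<omega> by simp
    ultimately obtain i where "real j * \<kappa> ^ i \<le> real (S (n0 + i) \<omega>)"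
      "\<not> real j * \<kappa> ^ Suc i \<le> real (S (n0 + Suc i) \<omega>)"
      using ex_least_nat_less[of "\<lambda>k. \<not> real j * \<kappa> ^ k \<le> real (S (n0 + k) \<omega>)" k] by auto
    with \<omega> show "\<omega> \<in> (\<Union>k. A k)" by (auto simp: A_def)
  qed
  then have "prob {\<omega>\<in>space M. S n0 \<omega> = j} \<le> prob (G \<union> (\<Union>k. A k))"
    by (intro finite_measure_mono) (auto simp: G_def)
  also have "\<dots> \<le> prob G + prob (\<Union>k. A k)"
    by (intro measure_Un_le) auto
  finally have G_pos: "0 < prob G"
    using prob_leaves_geometric_path_lt[OF j(1,3) H] unfolding A_def by linarith
  have "{\<omega>\<in>space M. (\<lambda>n. real (S n \<omega>)) \<longlonglongrightarrow> 0} \<subseteq> space M - G"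
  proof safe
    fix \<omega> assume lim: "(\<lambda>n. real (S n \<omega>)) \<longlonglongrightarrow> 0" and "\<omega> \<in> G"
    have "1 \<le> real (S (k + n0) \<omega>)" for k
    proof -
      have "real j * \<kappa> ^ k \<le> real (S (n0 + k) \<omega>)" using \<open>\<omega> \<in> G\<close> by (simp add: G_def)
      moreover have "1 * 1 \<le> real j * \<kappa> ^ k"
        using j(2) growth_factor by (intro mult_mono) (auto simp: one_le_power)
      ultimately show ?thesis by (simp add: add.commute)
    qed
    then show False
      using LIMSEQ_le_const[OF LIMSEQ_ignore_initial_segment[OF lim, of n0], of 1] by auto
  qed
  then have "prob {\<omega>\<in>space M. (\<lambda>n. real (S n \<omega>)) \<longlonglongrightarrow> 0} \<le> prob (space M - G)"
    by (cases "{\<omega>\<in>space M. (\<lambda>n. real (S n \<omega>)) \<longlonglongrightarrow> 0} \<in> sets M")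
      (auto intro: finite_measure_mono simp: measure_notin_sets)
  also have "\<dots> = 1 - prob G"
    by (simp add: prob_compl)
  finally show ?thesis using G_pos by linarith
qed

end

section \<open>The claims model\<close>

lemma (in prob_space) prob_sum_deviation_le:
  fixes Y :: "nat \<Rightarrow> 'a \<Rightarrow> real"
  assumes fin: "finite I" and card: "card I = n" and npos: "0 < n"
    and meas: "\<And>i. i \<in> I \<Longrightarrow> Y i \<in> borel_measurable M"
    and sq: "\<And>i. i \<in> I \<Longrightarrow> integrable M (\<lambda>\<omega>. (Y i \<omega>)^2)"
    and ind: "\<And>i j. i \<in> I \<Longrightarrow> j \<in> I \<Longrightarrow> i \<noteq> j \<Longrightarrow> indep_var borel (Y i) borel (Y j)"
    and mean: "\<And>i. i \<in> I \<Longrightarrow> expectation (Y i) = a"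
    and sec: "\<And>i. i \<in> I \<Longrightarrow> expectation (\<lambda>\<omega>. (Y i \<omega>)^2) = b"
    and eta: "0 < \<eta>"
  shows "prob {\<omega>\<in>space M. \<eta> * real n \<le> \<bar>(\<Sum>i\<in>I. Y i \<omega>) - real n * a\<bar>} \<le> (b - a^2) / (\<eta>^2 * real n)"
proof -
  define f where "f \<omega> = (\<Sum>i\<in>I. Y i \<omega>)" for \<omega>
  have intY: "integrable M (Y i)" if "i \<in> I" for i
    using square_integrable_imp_integrable[OF meas[OF that] sq[OF that]] .
  have prod_int: "integrable M (\<lambda>\<omega>. Y i \<omega> * Y j \<omega>)" if "i \<in> I" "j \<in> I" for i j
  proof (cases "i = j")
    case True then show ?thesis using sq[OF that(1)] by (simp add: power2_eq_square)
  next
    case False then show ?thesis using ind[OF that False] intY that by (intro indep_var_integrable) auto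
  qed
  have prod_exp: "expectation (\<lambda>\<omega>. Y i \<omega> * Y j \<omega>) = (if i = j then b else a * a)" if "i \<in> I" "j \<in> I" for i j
  proof (cases "i = j")
    case True then show ?thesis using sec[OF that(1)] by (simp add: power2_eq_square)
  next
    case False then show ?thesis using ind[OF that False] intY that mean by (subst indep_var_lebesgue_integral) auto
  qed
  have f_meas: "f \<in> borel_measurable M" unfolding f_def using meas by (intro borel_measurable_sum) auto
  have f_sq: "(\<lambda>\<omega>. (f \<omega>)^2) = (\<lambda>\<omega>. \<Sum>i\<in>I. \<Sum>j\<in>I. Y i \<omega> * Y j \<omega>)"
    by (rule ext) (simp only: f_def power2_eq_square sum_product)
  have f_sq_int: "integrable M (\<lambda>\<omega>. (f \<omega>)^2)" unfolding f_sq using prod_int by auto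
  have f_int: "integrable M f" unfolding f_def using intY by auto
  have Ef: "expectation f = real n * a" unfolding f_def using intY mean card
    by (subst Bochner_Integration.integral_sum) auto
  have row: "(\<Sum>j\<in>I. if i = j then b else a * a) = b + real (n - 1) * (a * a)" if "i \<in> I" for i
  proof -
    have "(\<Sum>j\<in>I. if i = j then b else a * a) = b + (\<Sum>j\<in>I - {i}. a * a)"
      by (subst sum.remove[OF fin that]) (auto intro: sum.cong)
    then show ?thesis using card fin that by (simp add: card_Diff_singleton)
  qed
  have "expectation (\<lambda>\<omega>. (f \<omega>)^2) = (\<Sum>i\<in>I. \<Sum>j\<in>I. expectation (\<lambda>\<omega>. Y i \<omega> * Y j \<omega>))"
    unfolding f_sq using prod_int by (simp add: Bochner_Integration.integral_sum)
  also have "\<dots> = (\<Sum>i\<in>I. b + real (n - 1) * (a * a))"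
    using prod_exp row by (intro sum.cong) auto
  finally have Ef2: "expectation (\<lambda>\<omega>. (f \<omega>)^2) = real n * (b + real (n - 1) * (a * a))"
    using card by simp
  have var: "variance f = real n * (b - a^2)"
    using variance_eq[OF f_int f_sq_int] npos unfolding Ef2 Ef
    by (simp add: of_nat_diff power2_eq_square algebra_simps)
  have "prob {\<omega>\<in>space M. \<eta> * real n \<le> \<bar>f \<omega> - expectation f\<bar>} \<le> variance f / (\<eta> * real n)^2"
    using Chebyshev_inequality[OF f_meas f_sq_int] eta npos by simp
  also have "\<dots> = (b - a^2) / (\<eta>^2 * real n)"
    unfolding var using npos by (simp add: power2_eq_square)
  finally show ?thesis unfolding Ef f_def .
qed

locale sf_process = prob_space M for M :: "'a measure" +
  fixes D :: "nat \<Rightarrow> nat \<Rightarrow> 'a \<Rightarrow> nat"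
    and X R :: "nat \<Rightarrow> nat \<Rightarrow> 'a \<Rightarrow> real"
    and \<theta> :: real
  assumes D_meas: "\<And>n k. D n k \<in> measurable M (count_space UNIV)"
    and X_meas: "\<And>n k. X n k \<in> borel_measurable M"
    and R_meas: "\<And>n k. R n k \<in> borel_measurable M"
    and indep: "indep_vars (\<lambda>_. borel) (allvars D X R) allidx"
    and D_id: "\<And>n k. k \<ge> 1 \<Longrightarrow>
        distr M (count_space UNIV) (D n k) = distr M (count_space UNIV) (D 0 1)"
    and X_id: "\<And>n k. k \<ge> 1 \<Longrightarrow> distr M borel (X n k) = distr M borel (X 0 1)"
    and R_id: "\<And>n k. k \<ge> 1 \<Longrightarrow> distr M borel (R n k) = distr M borel (R 0 1)"
    and X_nonneg: "\<And>n k \<omega>. \<omega> \<in> space M \<Longrightarrow> X n k \<omega> \<ge> 0"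
    and F_cont: "\<And>x. isCont (cdf (distr M borel (X 0 1))) x"
    and D_var: "integrable M (\<lambda>\<omega>. (real (D 0 1 \<omega>))\<^sup>2)"
    and X_var: "integrable M (\<lambda>\<omega>. (X 0 1 \<omega>)\<^sup>2)"
    and R_var: "integrable M (\<lambda>\<omega>. (R 0 1 \<omega>)\<^sup>2)"
    and m_gt1: "(\<integral>\<omega>. real (D 0 1 \<omega>) \<partial>M) > 1"
    and X_bdd: "\<exists>B. \<forall>n k. \<forall>\<omega>\<in>space M. X n k \<omega> \<le> B"
    and theta: "(LINT x : {\<theta>..Sup (cdf_support (cdf (distr M borel (X 0 1)))) } | distr M borel (X 0 1). x)
        = (\<integral>\<omega>. R 0 1 \<omega> \<partial>M) / (\<integral>\<omega>. real (D 0 1 \<omega>) \<partial>M)"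
    and supercrit: "(\<integral>\<omega>. real (D 0 1 \<omega>) \<partial>M) * (1 - cdf (distr M borel (X 0 1)) \<theta>) > 1"
begin

abbreviation "F \<equiv> cdf (distr M borel (X 0 1))"
abbreviation "mean_D \<equiv> \<integral>\<omega>. real (D 0 1 \<omega>) \<partial>M"
abbreviation "mean_R \<equiv> \<integral>\<omega>. R 0 1 \<omega> \<partial>M"

declare D_meas[measurable] X_meas[measurable] R_meas[measurable]

lemma cdf_X_eq: "F x = prob {\<omega>\<in>space M. X 0 1 \<omega> \<le> x}"
proof -
  have "F x = measure (distr M borel (X 0 1)) {..x}" by (simp add: cdf_def)
  also have "\<dots> = prob (X 0 1 -` {..x} \<inter> space M)" by (subst measure_distr) auto
  also have "X 0 1 -` {..x} \<inter> space M = {\<omega>\<in>space M. X 0 1 \<omega> \<le> x}" by auto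
  finally show ?thesis .
qed

lemma one_minus_cdf_X_eq: "1 - F x = prob {\<omega>\<in>space M. x < X 0 1 \<omega>}"
proof -
  have "{\<omega>\<in>space M. x < X 0 1 \<omega>} = space M - {\<omega>\<in>space M. X 0 1 \<omega> \<le> x}" by auto
  then show ?thesis unfolding cdf_X_eq by (simp add: prob_compl)
qed

lemma cdf_X_mono: "x \<le> y \<Longrightarrow> F x \<le> F y"
  unfolding cdf_X_eq by (intro finite_measure_mono) auto

lemma cdf_X_le_1: "F x \<le> 1"
  unfolding cdf_X_eq by simp

lemma cdf_X_eq_0: "x < 0 \<Longrightarrow> F x = 0"
proof -
  assume "x < 0"
  then have "{\<omega>\<in>space M. X 0 1 \<omega> \<le> x} = {}" using X_nonneg[of _ 0 1] by force
  then show ?thesis unfolding cdf_X_eq by (metis measure_empty)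
qed

lemma cdf_X_0: "F 0 = 0"
proof -
  have "(F \<longlongrightarrow> F 0) (at_left 0)"
    using F_cont[of 0] by (simp add: isCont_def filterlim_at_split)
  moreover have "(F \<longlongrightarrow> 0) (at_left (0::real))"
  proof (rule tendsto_eventually, rule eventually_mono)
    show "eventually (\<lambda>y. y \<in> {-1<..<0}) (at_left (0::real))"
      by (rule eventually_at_left_real) simp
    show "F y = 0" if "y \<in> {-1<..<0}" for y
      using that by (intro cdf_X_eq_0) simp
  qed
  ultimately show ?thesis using tendsto_unique[OF trivial_limit_at_left_real] by blast
qed

definition claim_bound :: real where
  "claim_bound = (SOME B. \<forall>n k. \<forall>\<omega>\<in>space M. X n k \<omega> \<le> B)"

lemma X_le_claim_bound: "\<omega> \<in> space M \<Longrightarrow> X n k \<omega> \<le> claim_bound"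
  using someI_ex[OF X_bdd] unfolding claim_bound_def by blast

lemma cdf_X_eq_1: "claim_bound \<le> x \<Longrightarrow> F x = 1"
proof -
  assume "claim_bound \<le> x"
  then have "{\<omega>\<in>space M. X 0 1 \<omega> \<le> x} = space M" using X_le_claim_bound[of _ 0 1] by force
  then show ?thesis unfolding cdf_X_eq by (simp add: prob_space)
qed

lemma cdf_support_le_claim_bound: "cdf_support F \<subseteq> {..claim_bound}"
proof
  fix x assume x: "x \<in> cdf_support F"
  show "x \<in> {..claim_bound}"
  proof (rule ccontr)
    assume "x \<notin> {..claim_bound}"
    then have d: "0 < x - claim_bound" by simp
    have "F (x + (x - claim_bound)) = 1" by (rule cdf_X_eq_1) (use d in linarith)
    moreover have "F (x - (x - claim_bound)) = 1" by (rule cdf_X_eq_1) simp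
    moreover have "0 < F (x + (x - claim_bound)) - F (x - (x - claim_bound))"
      using x d unfolding cdf_support_def by blast
    ultimately show False by simp
  qed
qed

lemma cdf_X_Sup_support: "F (Sup (cdf_support F)) = 1"
proof (rule ccontr)
  define b where "b = Sup (cdf_support F)"
  assume "F (Sup (cdf_support F)) \<noteq> 1"
  then have lt: "F b < 1" using cdf_X_le_1[of b] by (simp add: b_def)
  define A where "A = {x. F x < 1}"
  have "x \<le> claim_bound" if "x \<in> A" for x
  proof (rule ccontr)
    assume "\<not> x \<le> claim_bound"
    then have "F x = 1" by (intro cdf_X_eq_1) simp
    with that show False by (simp add: A_def)
  qed
  then have A_bdd: "bdd_above A" by (rule bdd_aboveI)
  define x0 where "x0 = Sup A"
  have "b \<le> x0" unfolding x0_def using lt A_bdd by (intro cSup_upper) (auto simp: A_def)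
  have "x0 \<in> cdf_support F"
    unfolding cdf_support_def
  proof (intro CollectI allI impI)
    fix e :: real assume e: "0 < e"
    have "x0 + e \<notin> A" using cSup_upper[OF _ A_bdd, of "x0 + e"] e by (auto simp: x0_def)
    then have "F (x0 + e) = 1" using cdf_X_le_1[of "x0 + e"] by (simp add: A_def)
    moreover obtain a where "a \<in> A" "x0 - e < a"
      using e lt less_cSup_iff[OF _ A_bdd, of "x0 - e"] by (auto simp: x0_def A_def)
    then have "F (x0 - e) < 1" using cdf_X_mono[of "x0 - e" a] by (simp add: A_def)
    ultimately show "0 < F (x0 + e) - F (x0 - e)" by simp
  qed
  then have "x0 \<le> b"
    unfolding b_def using cdf_support_le_claim_bound by (intro cSup_upper) (auto simp: bdd_above_def)
  with \<open>b \<le> x0\<close> have x0b: "x0 = b" by simp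
  have "\<exists>s>0. \<forall>y. y \<noteq> b \<and> norm (y - b) < s \<longrightarrow> norm (F y - F b) < 1 - F b"
    using F_cont[of b] lt unfolding isCont_def LIM_eq by simp
  then obtain s where s: "s > 0" "\<And>y. y \<noteq> b \<Longrightarrow> norm (y - b) < s \<Longrightarrow> norm (F y - F b) < 1 - F b"
    by blast
  have "F (b + s/2) < 1" using s(2)[of "b + s/2"] s(1) by simp
  then have "b + s/2 \<le> x0" unfolding x0_def using A_bdd by (intro cSup_upper) (auto simp: A_def)
  with x0b s show False by simp
qed

lemma AE_X_le_Sup_support: "AE \<omega> in M. X 0 1 \<omega> \<le> Sup (cdf_support F)"
proof -
  have "prob {\<omega>\<in>space M. Sup (cdf_support F) < X 0 1 \<omega>} = 0"
    using one_minus_cdf_X_eq[of "Sup (cdf_support F)"] cdf_X_Sup_support by simp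
  then show ?thesis
    by (intro AE_I'[where N="{\<omega>\<in>space M. Sup (cdf_support F) < X 0 1 \<omega>}"])
      (auto simp: null_sets_def emeasure_eq_measure)
qed

lemma exists_threshold:
  obtains \<theta>1 where "max \<theta> 0 < \<theta>1" "F (max \<theta> 0) < F \<theta>1" "1 < mean_D * (1 - F \<theta>1)"
proof -
  define \<theta>' where "\<theta>' = max \<theta> 0"
  have F\<theta>': "F \<theta>' = F \<theta>"
    using cdf_X_eq_0[of \<theta>] cdf_X_0 by (cases "0 \<le> \<theta>") (auto simp: \<theta>'_def)
  define p where "p = 1 / mean_D"
  have p: "0 < p" "p < 1 - F \<theta>"
    using supercrit m_gt1 by (simp_all add: p_def field_simps)
  define y where "y = (F \<theta> + (1 - p)) / 2"
  have y1: "F \<theta> < y \<and> y < 1"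
    using p cdf_X_le_1[of \<theta>] unfolding y_def by argo
  have "mean_D * (1 - y) = (mean_D * (1 - F \<theta>) + 1) / 2"
    using m_gt1 by (simp add: y_def p_def field_simps)
  then have y2: "1 < mean_D * (1 - y)" using supercrit by argo
  have "\<theta> \<le> claim_bound"
  proof (rule ccontr)
    assume "\<not> \<theta> \<le> claim_bound"
    then have "F \<theta> = 1" by (intro cdf_X_eq_1) simp
    with p show False by simp
  qed
  then have "\<theta>' \<le> max claim_bound 0" by (simp add: \<theta>'_def)
  moreover have "F (max claim_bound 0) = 1" by (intro cdf_X_eq_1) simp
  moreover have "continuous_on {\<theta>'..max claim_bound 0} F"
    by (intro continuous_at_imp_continuous_on ballI F_cont)
  ultimately obtain \<theta>1 where "\<theta>' \<le> \<theta>1" "F \<theta>1 = y"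
    using IVT'[of F \<theta>' y "max claim_bound 0"] F\<theta>' y1 by auto
  moreover have "\<theta>1 \<noteq> \<theta>'" using \<open>F \<theta>1 = y\<close> F\<theta>' y1 by auto
  ultimately have "\<theta>' < \<theta>1" by simp
  with \<open>F \<theta>1 = y\<close> F\<theta>' y1 y2 show ?thesis
    by (intro that[of \<theta>1]) (simp_all add: \<theta>'_def)
qed

text \<open>The claims above a threshold beyond \<open>\<theta>\<close> have smaller mean mass than \<open>[\<theta>, b]\<close>, which
  is \<open>r / m\<close> by the choice of \<open>\<theta>\<close>.\<close>

lemma truncated_mean_lt:
  assumes "\<theta> \<le> \<theta>'" "0 \<le> \<theta>'" "\<theta>' < \<theta>1" "F \<theta>' < F \<theta>1"
  shows "mean_D * (\<integral>\<omega>. (if \<theta>1 < X 0 1 \<omega> then X 0 1 \<omega> else 0) \<partial>M) < mean_R"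
proof -
  define b where "b = Sup (cdf_support F)"
  define upper where "upper \<omega> = (if \<theta>1 < X 0 1 \<omega> then X 0 1 \<omega> else 0)" for \<omega>
  define middle where "middle \<omega> = (if \<theta>' < X 0 1 \<omega> \<and> X 0 1 \<omega> \<le> \<theta>1 then X 0 1 \<omega> else 0)" for \<omega>
  define inside where "inside \<omega> = indicator {\<theta>..b} (X 0 1 \<omega>) * X 0 1 \<omega>" for \<omega>
  define beyond where "beyond \<omega> = (if b < X 0 1 \<omega> then X 0 1 \<omega> else 0)" for \<omega>
  have X_int: "integrable M (X 0 1)"
    by (rule square_integrable_imp_integrable[OF X_meas X_var])
  have int: "integrable M upper" "integrable M middle" "integrable M inside" "integrable M beyond"
    unfolding upper_def middle_def inside_def beyond_def
    by (auto intro!: Bochner_Integration.integrable_bound[OF X_int] simp: X_nonneg indicator_def)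
  have "expectation beyond = 0"
    using AE_X_le_Sup_support by (intro integral_eq_zero_AE) (auto simp: beyond_def b_def)
  moreover have "expectation inside = mean_R / mean_D"
    using theta by (simp add: set_lebesgue_integral_def integral_distr inside_def[abs_def] b_def)
  moreover have "upper \<omega> + middle \<omega> \<le> inside \<omega> + beyond \<omega>" if "\<omega> \<in> space M" for \<omega>
    using X_nonneg[OF that, of 0 1] assms(1,3)
    by (auto simp: upper_def middle_def inside_def beyond_def indicator_def)
  then have "expectation upper + expectation middle \<le> expectation inside + expectation beyond"
    using int by (simp flip: Bochner_Integration.integral_add add: integral_mono)
  moreover have "0 < expectation middle"
  proof (rule ccontr)
    define Mid where "Mid = {\<omega>\<in>space M. \<theta>' < X 0 1 \<omega> \<and> X 0 1 \<omega> \<le> \<theta>1}"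
    have Mid_sets: "Mid \<in> sets M" by (simp add: Mid_def)
    have "Mid = {\<omega>\<in>space M. X 0 1 \<omega> \<le> \<theta>1} - {\<omega>\<in>space M. X 0 1 \<omega> \<le> \<theta>'}"
      by (auto simp: Mid_def)
    then have "prob Mid = F \<theta>1 - F \<theta>'"
      using assms(3) by (simp only: cdf_X_eq) (rule finite_measure_Diff, auto)
    then have Mid_pos: "emeasure M Mid \<noteq> 0" using assms(4) by (simp add: emeasure_eq_measure)
    assume "\<not> 0 < expectation middle"
    moreover have "0 \<le> expectation middle" by (intro integral_nonneg_AE) (simp add: middle_def X_nonneg)
    ultimately have "AE \<omega> in M. middle \<omega> = 0"
      using integral_nonneg_eq_0_iff_AE[OF int(2)] by (simp add: middle_def X_nonneg)
    then have "AE \<omega> in M. \<omega> \<notin> Mid"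
      by (rule AE_mp) (use assms(2) in \<open>auto simp: Mid_def middle_def\<close>)
    then show False using AE_iff_measurable[OF Mid_sets, of "\<lambda>\<omega>. \<omega> \<notin> Mid"] Mid_pos
      by (auto simp: Mid_def)
  qed
  ultimately have "expectation upper < mean_R / mean_D" by linarith
  then show ?thesis using m_gt1 by (simp add: upper_def[abs_def] pos_less_divide_eq mult.commute)
qed

abbreviation "V c n i \<equiv> allvars D X R (c, n, i)"

lemma allvars_simps[simp]:
  "V 0 n i = (\<lambda>\<omega>. real (D n i \<omega>))" "V 1 n i = X n i" "V (Suc 0) n i = X n i" "V 2 n i = R n i"
  by (auto simp: allvars_def fun_eq_iff)

lemma measurable_allvars[measurable]: "V c n i \<in> borel_measurable M"
  unfolding allvars_def by measurable

lemma distr_allvars: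
  assumes "1 \<le> i" "c \<in> {0, 1, 2}"
  shows "distr M borel (V c n i) = distr M borel (V c 0 1)"
proof -
  consider "c = 0" | "c = 1" | "c = 2" using assms(2) by auto
  then show ?thesis
  proof cases
    case 1
    have "distr M borel (V 0 n i) = distr (distr M (count_space UNIV) (D n i)) borel real" for n i
      by (subst distr_distr) (auto simp: o_def)
    then show ?thesis using 1 D_id[OF assms(1), of n] by simp
  qed (use X_id[OF assms(1), of n] R_id[OF assms(1), of n] in simp_all)
qed

lemma integrable_allvars_iff:
  fixes h :: "real \<Rightarrow> real"
  assumes "1 \<le> i" "c \<in> {0, 1, 2}" and [measurable]: "h \<in> borel_measurable borel"
  shows "integrable M (\<lambda>\<omega>. h (V c n i \<omega>)) \<longleftrightarrow> integrable M (\<lambda>\<omega>. h (V c 0 1 \<omega>))"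
proof -
  have "integrable M (\<lambda>\<omega>. h (V c n i \<omega>)) \<longleftrightarrow> integrable (distr M borel (V c n i)) h"
    by (rule integrable_distr_eq[symmetric]) auto
  also have "\<dots> \<longleftrightarrow> integrable M (\<lambda>\<omega>. h (V c 0 1 \<omega>))"
    unfolding distr_allvars[OF assms(1,2)] by (rule integrable_distr_eq) auto
  finally show ?thesis .
qed

lemma expectation_allvars:
  fixes h :: "real \<Rightarrow> real"
  assumes "1 \<le> i" "c \<in> {0, 1, 2}" and [measurable]: "h \<in> borel_measurable borel"
  shows "expectation (\<lambda>\<omega>. h (V c n i \<omega>)) = expectation (\<lambda>\<omega>. h (V c 0 1 \<omega>))"
proof -
  have "expectation (\<lambda>\<omega>. h (V c n i \<omega>)) = integral\<^sup>L (distr M borel (V c n i)) h"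
    by (rule integral_distr[symmetric]) auto
  also have "\<dots> = expectation (\<lambda>\<omega>. h (V c 0 1 \<omega>))"
    unfolding distr_allvars[OF assms(1,2)] by (rule integral_distr) auto
  finally show ?thesis .
qed

lemma indep_var_allvars:
  assumes "a \<in> allidx" "a' \<in> allidx" "a \<noteq> a'"
    and h[measurable]: "h \<in> borel_measurable borel" and h'[measurable]: "h' \<in> borel_measurable borel"
  shows "indep_var borel (\<lambda>\<omega>. h (allvars D X R a \<omega>)) borel (\<lambda>\<omega>. h' (allvars D X R a' \<omega>))"
proof -
  have "indep_var (PiM {a} (\<lambda>_. borel)) (\<lambda>\<omega>. restrict (\<lambda>i. allvars D X R i \<omega>) {a})
      (PiM {a'} (\<lambda>_. borel)) (\<lambda>\<omega>. restrict (\<lambda>i. allvars D X R i \<omega>) {a'})"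
    using assms by (intro indep_var_restrict[OF indep]) auto
  then have "indep_var borel ((\<lambda>v. h (v a)) \<circ> (\<lambda>\<omega>. restrict (\<lambda>i. allvars D X R i \<omega>) {a}))
      borel ((\<lambda>v. h' (v a')) \<circ> (\<lambda>\<omega>. restrict (\<lambda>i. allvars D X R i \<omega>) {a'}))"
    by (rule indep_var_compose) measurable
  then show ?thesis by (simp add: o_def)
qed

lemma prob_partial_sum_deviation_le:
  assumes c: "c \<in> {0, 1, 2}" and h[measurable]: "h \<in> borel_measurable borel"
    and sq: "integrable M (\<lambda>\<omega>. (h (V c 0 1 \<omega>))^2)"
    and tk: "1 \<le> t" "t \<le> k" and \<eta>: "0 < \<eta>"
  shows "prob {\<omega>\<in>space M. \<eta> * real k \<le> \<bar>(\<Sum>i=1..k. h (V c n i \<omega>)) - real k * expectation (\<lambda>\<omega>. h (V c 0 1 \<omega>))\<bar>}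
    \<le> (expectation (\<lambda>\<omega>. (h (V c 0 1 \<omega>))^2) - (expectation (\<lambda>\<omega>. h (V c 0 1 \<omega>)))^2) / (\<eta>^2 * real t)"
proof -
  define var where "var = expectation (\<lambda>\<omega>. (h (V c 0 1 \<omega>))^2) - (expectation (\<lambda>\<omega>. h (V c 0 1 \<omega>)))^2"
  have hsq[measurable]: "(\<lambda>x. (h x)^2) \<in> borel_measurable borel" by measurable
  have "prob {\<omega>\<in>space M. \<eta> * real k \<le> \<bar>(\<Sum>i=1..k. h (V c n i \<omega>)) - real k * expectation (\<lambda>\<omega>. h (V c 0 1 \<omega>))\<bar>}
      \<le> var / (\<eta>^2 * real k)"
    unfolding var_def
  proof (rule prob_sum_deviation_le[where Y="\<lambda>i \<omega>. h (V c n i \<omega>)" and I="{1..k}" and n=k, OF _ _ _ _ _ _ _ _ \<eta>])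
    fix i j assume "i \<in> {1..k}" "j \<in> {1..k}" "i \<noteq> j"
    then show "indep_var borel (\<lambda>\<omega>. h (V c n i \<omega>)) borel (\<lambda>\<omega>. h (V c n j \<omega>))"
      using c by (intro indep_var_allvars h) (auto simp: allidx_def)
  next
    fix i assume "i \<in> {1..k}"
    then have i: "1 \<le> i" by simp
    show "integrable M (\<lambda>\<omega>. (h (V c n i \<omega>))^2)"
      using integrable_allvars_iff[OF i c hsq, of n] sq by simp
    show "expectation (\<lambda>\<omega>. h (V c n i \<omega>)) = expectation (\<lambda>\<omega>. h (V c 0 1 \<omega>))"
      by (rule expectation_allvars[OF i c h])
    show "expectation (\<lambda>\<omega>. (h (V c n i \<omega>))^2) = expectation (\<lambda>\<omega>. (h (V c 0 1 \<omega>))^2)"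
      using expectation_allvars[OF i c hsq, of n] by simp
  next
    show "finite {1..k}" "card {1..k} = k" "0 < k" using tk by auto
    show "(\<lambda>\<omega>. h (V c n i \<omega>)) \<in> borel_measurable M" for i by measurable
  qed
  also have "\<dots> \<le> var / (\<eta>^2 * real t)"
  proof (rule divide_left_mono)
    have "integrable M (\<lambda>\<omega>. h (V c 0 1 \<omega>))"
      by (rule square_integrable_imp_integrable[OF _ sq]) measurable
    then have "variance (\<lambda>\<omega>. h (V c 0 1 \<omega>)) = var"
      unfolding var_def using sq by (rule variance_eq)
    then show "0 \<le> var" using variance_positive[of "\<lambda>\<omega>. h (V c 0 1 \<omega>)"] by simp
    show "\<eta>^2 * real t \<le> \<eta>^2 * real k" using tk by (intro mult_left_mono) auto
    show "0 < \<eta>^2 * real k * (\<eta>^2 * real t)" using tk \<eta> by (intro mult_pos_pos) auto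
  qed
  finally show ?thesis unfolding var_def .
qed

end

locale sf_thresholds = sf_process +
  fixes \<theta>1 \<delta> :: real
  assumes threshold_pos: "0 < \<theta>1"
    and slack_pos: "0 < \<delta>"
    and slack_lt_tail: "\<delta> < 1 - F \<theta>1"
    and slack_le_mean: "1 \<le> mean_D - \<delta>"
    and growth_rate: "1 < (mean_D - \<delta>) * (1 - F \<theta>1 - \<delta>)"
    and budget: "(mean_D + \<delta>) * ((\<integral>\<omega>. (if \<theta>1 < X 0 1 \<omega> then X 0 1 \<omega> else 0) \<partial>M) + \<delta>) \<le> mean_R - \<delta>"

context sf_process
begin

lemma sf_thresholds_exist: "\<exists>\<theta>1 \<delta>. sf_thresholds M D X R \<theta> \<theta>1 \<delta>"
proof -
  obtain \<theta>1 where \<theta>1: "max \<theta> 0 < \<theta>1" "F (max \<theta> 0) < F \<theta>1" "1 < mean_D * (1 - F \<theta>1)"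
    by (rule exists_threshold)
  define q where "q = 1 - F \<theta>1"
  define g where "g = (\<integral>\<omega>. (if \<theta>1 < X 0 1 \<omega> then X 0 1 \<omega> else 0) \<partial>M)"
  have "mean_D * g < mean_R"
    unfolding g_def using \<theta>1 by (intro truncated_mean_lt[of "max \<theta> 0"]) auto
  have "0 < q"
  proof (rule ccontr)
    assume "\<not> 0 < q"
    then have "mean_D * q \<le> 0" using m_gt1 by (simp add: mult_nonneg_nonpos)
    with \<theta>1(3) show False by (simp add: q_def)
  qed
  have lim: "((\<lambda>\<delta>. \<delta>) \<longlongrightarrow> 0) (at_right (0::real))" by (rule tendsto_ident_at)
  have "((\<lambda>\<delta>. (mean_D - \<delta>) * (q - \<delta>)) \<longlongrightarrow> (mean_D - 0) * (q - 0)) (at_right 0)"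
    "((\<lambda>\<delta>. (mean_D + \<delta>) * (g + \<delta>) + \<delta>) \<longlongrightarrow> (mean_D + 0) * (g + 0) + 0) (at_right 0)"
    by (intro tendsto_intros lim)+
  then have ev: "eventually (\<lambda>\<delta>. 1 < (mean_D - \<delta>) * (q - \<delta>)) (at_right 0)"
    "eventually (\<lambda>\<delta>. (mean_D + \<delta>) * (g + \<delta>) + \<delta> < mean_R) (at_right 0)"
    using \<theta>1(3) \<open>mean_D * g < mean_R\<close> by (auto simp: q_def dest: order_tendstoD)
  have ev': "eventually (\<lambda>\<delta>. 0 < \<delta> \<and> \<delta> < q \<and> \<delta> < mean_D - 1) (at_right 0)"
    using \<open>0 < q\<close> m_gt1 eventually_at_right_less order_tendstoD(2)[OF lim]
    by (simp add: eventually_conj_iff)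
  have "eventually (\<lambda>\<delta>. (0 < \<delta> \<and> \<delta> < q \<and> \<delta> < mean_D - 1) \<and>
      1 < (mean_D - \<delta>) * (q - \<delta>) \<and> (mean_D + \<delta>) * (g + \<delta>) + \<delta> < mean_R) (at_right 0)"
    using eventually_conj[OF ev' eventually_conj[OF ev]] .
  then obtain \<delta> where "0 < \<delta>" "\<delta> < q" "\<delta> < mean_D - 1" "1 < (mean_D - \<delta>) * (q - \<delta>)"
    "(mean_D + \<delta>) * (g + \<delta>) + \<delta> < mean_R"
    using eventually_happens[of _ "at_right (0::real)"] by auto
  then have "sf_thresholds M D X R \<theta> \<theta>1 \<delta>"
    using \<theta>1(1) unfolding q_def g_def
    by (intro sf_thresholds.intro sf_process.intro prob_space_axioms sf_process_axioms
        sf_thresholds_axioms.intro) auto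
  then show ?thesis by blast
qed

end

section \<open>Typical generations\<close>

context sf_thresholds
begin

abbreviation "tail \<equiv> 1 - F \<theta>1"
abbreviation "tail_mean \<equiv> \<integral>\<omega>. (if \<theta>1 < X 0 1 \<omega> then X 0 1 \<omega> else 0) \<partial>M"
abbreviation "sample \<omega> \<equiv> (\<lambda>i. allvars D X R i \<omega>)"

definition lower :: "nat \<Rightarrow> nat" where
  "lower t = nat \<lfloor>real t * (mean_D - \<delta>)\<rfloor>"

definition upper :: "nat \<Rightarrow> nat" where
  "upper t = nat \<lfloor>real t * (mean_D + \<delta>)\<rfloor>"

text \<open>The claims are read up to the deterministic bounds \<open>lower t \<le> D\<^sub>n(t) \<le> upper t\<close>, valid on
  typical generations, so that the event depends on a fixed finite set of coordinates.\<close>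

definition typical :: "nat \<Rightarrow> nat \<Rightarrow> (nat \<times> nat \<times> nat \<Rightarrow> real) \<Rightarrow> bool" where
  "typical n t v \<longleftrightarrow>
     \<bar>(\<Sum>j=1..t. v (0, n, j)) - real t * mean_D\<bar> < \<delta> * real t \<and>
     \<bar>(\<Sum>i=1..lower t. if \<theta>1 < v (1, n, i) then 1 else 0) - real (lower t) * tail\<bar> < \<delta> * real (lower t) \<and>
     \<bar>(\<Sum>i=1..upper t. if \<theta>1 < v (1, n, i) then v (1, n, i) else 0) - real (upper t) * tail_mean\<bar>
       < \<delta> * real (upper t) \<and>
     \<bar>(\<Sum>j=1..t. v (2, n, j)) - real t * mean_R\<bar> < \<delta> * real t"

lemma le_lower: "t \<le> lower t"
proof -
  have "real t \<le> real t * (mean_D - \<delta>)" using slack_le_mean by (simp add: mult_le_cancel_left1)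
  then show ?thesis unfolding lower_def by (simp add: le_nat_floor)
qed

lemma le_upper: "t \<le> upper t"
proof -
  have "real t \<le> real t * (mean_D + \<delta>)" using slack_le_mean slack_pos by (simp add: mult_le_cancel_left1)
  then show ?thesis unfolding upper_def by (simp add: le_nat_floor)
qed

lemma typical_offspring_bounds:
  assumes "typical n t (sample \<omega>)"
  shows "lower t \<le> Dsum D n t \<omega>" "Dsum D n t \<omega> \<le> upper t"
proof -
  have "real (Dsum D n t \<omega>) = (\<Sum>j=1..t. real (D n j \<omega>))" by (simp add: Dsum_def)
  then have "real t * (mean_D - \<delta>) < real (Dsum D n t \<omega>)" "real (Dsum D n t \<omega>) < real t * (mean_D + \<delta>)"
    using assms by (auto simp: typical_def algebra_simps abs_less_iff)
  then show "lower t \<le> Dsum D n t \<omega>" "Dsum D n t \<omega> \<le> upper t"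
    unfolding lower_def upper_def by (auto simp: nat_le_iff floor_le_iff intro!: le_nat_floor)
qed

lemma typical_many_large_claims:
  assumes "typical n t (sample \<omega>)"
  shows "real (lower t) * (tail - \<delta>) < card {i\<in>{1..Dsum D n t \<omega>}. \<theta>1 < X n i \<omega>}"
proof -
  define GL where "GL = {i\<in>{1..lower t}. \<theta>1 < X n i \<omega>}"
  have "(\<Sum>i\<in>GL. 1::real) = (\<Sum>i=1..lower t. if \<theta>1 < X n i \<omega> then 1 else 0)"
    unfolding GL_def by (rule sum.inter_filter) simp
  then have "real (lower t) * (tail - \<delta>) < card GL"
    using assms by (auto simp: typical_def abs_less_iff algebra_simps)
  also have "card GL \<le> card {i\<in>{1..Dsum D n t \<omega>}. \<theta>1 < X n i \<omega>}"
    using typical_offspring_bounds(1)[OF assms] unfolding GL_def by (intro card_mono) auto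
  finally show ?thesis by simp
qed

lemma tail_mean_nonneg: "0 \<le> tail_mean"
  by (intro integral_nonneg_AE AE_I2) (simp add: X_nonneg)

lemma typical_large_claims_fit:
  assumes \<omega>: "\<omega> \<in> space M" and tp: "typical n t (sample \<omega>)"
  shows "(\<Sum>i\<in>{i\<in>{1..Dsum D n t \<omega>}. \<theta>1 < X n i \<omega>}. X n i \<omega>) < Rsum R n t \<omega>"
proof -
  have "(\<Sum>i\<in>{i\<in>{1..Dsum D n t \<omega>}. \<theta>1 < X n i \<omega>}. X n i \<omega>)
      = (\<Sum>i=1..Dsum D n t \<omega>. if \<theta>1 < X n i \<omega> then X n i \<omega> else 0)"
    by (rule sum.inter_filter) simp
  also have "\<dots> \<le> (\<Sum>i=1..upper t. if \<theta>1 < X n i \<omega> then X n i \<omega> else 0)"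
    using typical_offspring_bounds(2)[OF tp] X_nonneg[OF \<omega>] by (intro sum_mono2) auto
  also have "\<dots> < real (upper t) * (tail_mean + \<delta>)"
    using tp by (auto simp: typical_def abs_less_iff algebra_simps cong: if_cong)
  also have "\<dots> \<le> real t * (mean_D + \<delta>) * (tail_mean + \<delta>)"
  proof (rule mult_right_mono)
    show "real (upper t) \<le> real t * (mean_D + \<delta>)"
      using slack_le_mean slack_pos unfolding upper_def by (simp add: of_nat_nat)
  qed (use tail_mean_nonneg slack_pos in simp)
  also have "\<dots> \<le> real t * (mean_R - \<delta>)"
    using budget by (simp add: mult.assoc mult_left_mono)
  also have "\<dots> < Rsum R n t \<omega>"
    using tp by (auto simp: typical_def Rsum_def abs_less_iff algebra_simps)
  finally show ?thesis .
qed

lemma typical_imp_sfM_gt: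
  assumes \<omega>: "\<omega> \<in> space M" and tp: "typical n t (sample \<omega>)"
  shows "real t * ((mean_D - \<delta>) * (tail - \<delta>)) - 1 < real (sfM (Dsum D n t \<omega>) (\<lambda>k. X n k \<omega>) (Rsum R n t \<omega>))"
proof -
  define G where "G = {i\<in>{1..Dsum D n t \<omega>}. \<theta>1 < X n i \<omega>}"
  have q: "0 < tail - \<delta>" "tail - \<delta> \<le> 1"
    using slack_lt_tail slack_pos cdf_X_0 cdf_X_mono[of 0 \<theta>1] threshold_pos by auto
  have "real t * (mean_D - \<delta>) - 1 \<le> real (lower t)"
    using slack_le_mean unfolding lower_def by (simp add: of_nat_nat)
  then have "real t * ((mean_D - \<delta>) * (tail - \<delta>)) - 1 \<le> real (lower t) * (tail - \<delta>)"
    using q mult_right_mono[of "real t * (mean_D - \<delta>) - 1" "real (lower t)" "tail - \<delta>"]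
    by (simp add: algebra_simps)
  also have lower_lt: "\<dots> < card G"
    unfolding G_def by (rule typical_many_large_claims[OF tp])
  also have "card G \<le> sfM (Dsum D n t \<omega>) (\<lambda>k. X n k \<omega>) (Rsum R n t \<omega>)"
  proof (rule card_claims_above_le_sfM[OF _ G_def])
    have "0 \<le> real (lower t) * (tail - \<delta>)" using q by simp
    with lower_lt show "G \<noteq> {}" by auto
    show "(\<Sum>i\<in>G. X n i \<omega>) \<le> Rsum R n t \<omega>"
      using typical_large_claims_fit[OF \<omega> tp] by (simp add: G_def)
  qed (use threshold_pos in simp)
  finally show ?thesis by simp
qed

lemma sets_not_typical[measurable]: "{\<omega>\<in>space M. \<not> typical n t (sample \<omega>)} \<in> sets M"
  unfolding typical_def by measurable

definition deviation_bound :: real where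
  "deviation_bound =
    ((expectation (\<lambda>\<omega>. (real (D 0 1 \<omega>))\<^sup>2) - mean_D\<^sup>2)
     + (expectation (\<lambda>\<omega>. (if \<theta>1 < X 0 1 \<omega> then 1 else 0)\<^sup>2) - tail\<^sup>2)
     + (expectation (\<lambda>\<omega>. (if \<theta>1 < X 0 1 \<omega> then X 0 1 \<omega> else 0)\<^sup>2) - tail_mean\<^sup>2)
     + (expectation (\<lambda>\<omega>. (R 0 1 \<omega>)\<^sup>2) - mean_R\<^sup>2)) / \<delta>\<^sup>2"

lemma expectation_indicator_X: "expectation (\<lambda>\<omega>. if \<theta>1 < X 0 1 \<omega> then 1 else 0) = tail"
proof -
  have "expectation (\<lambda>\<omega>. if \<theta>1 < X 0 1 \<omega> then 1 else 0) = expectation (indicator {\<omega>\<in>space M. \<theta>1 < X 0 1 \<omega>})"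
    by (intro Bochner_Integration.integral_cong) (auto simp: indicator_def)
  also have "\<dots> = prob {\<omega>\<in>space M. \<theta>1 < X 0 1 \<omega>}"
    by (simp del: One_nat_def)
  finally show ?thesis by (simp only: one_minus_cdf_X_eq)
qed

lemma prob_not_typical_le:
  assumes "1 \<le> t"
  shows "prob {\<omega>\<in>space M. \<not> typical n t (sample \<omega>)} \<le> deviation_bound / real t"
proof -
  let ?ind = "\<lambda>x. if \<theta>1 < x then 1 else 0 :: real" and ?cap = "\<lambda>x. if \<theta>1 < x then x else 0 :: real"
  define B1 where "B1 = {\<omega>\<in>space M. \<delta> * real t \<le> \<bar>(\<Sum>i=1..t. V 0 n i \<omega>) - real t * expectation (V 0 0 1)\<bar>}"
  define B2 where "B2 = {\<omega>\<in>space M. \<delta> * real (lower t)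
      \<le> \<bar>(\<Sum>i=1..lower t. ?ind (V 1 n i \<omega>)) - real (lower t) * expectation (\<lambda>\<omega>. ?ind (V 1 0 1 \<omega>))\<bar>}"
  define B3 where "B3 = {\<omega>\<in>space M. \<delta> * real (upper t)
      \<le> \<bar>(\<Sum>i=1..upper t. ?cap (V 1 n i \<omega>)) - real (upper t) * expectation (\<lambda>\<omega>. ?cap (V 1 0 1 \<omega>))\<bar>}"
  define B4 where "B4 = {\<omega>\<in>space M. \<delta> * real t \<le> \<bar>(\<Sum>i=1..t. V 2 n i \<omega>) - real t * expectation (V 2 0 1)\<bar>}"
  have [measurable]: "B1 \<in> sets M" "B2 \<in> sets M" "B3 \<in> sets M" "B4 \<in> sets M"
    unfolding B1_def B2_def B3_def B4_def by measurable
  have "{\<omega>\<in>space M. \<not> typical n t (sample \<omega>)} \<subseteq> B1 \<union> B2 \<union> B3 \<union> B4"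
    unfolding typical_def B1_def B2_def B3_def B4_def
    by (auto simp: not_less expectation_indicator_X simp del: One_nat_def cong: if_cong)
  then have "prob {\<omega>\<in>space M. \<not> typical n t (sample \<omega>)} \<le> prob (B1 \<union> B2 \<union> B3 \<union> B4)"
    by (intro finite_measure_mono) auto
  also have "\<dots> \<le> prob B1 + prob B2 + prob B3 + prob B4"
    by (intro order_trans[OF measure_Un_le] add_right_mono) auto
  also have "\<dots> \<le> deviation_bound / real t"
  proof -
    have ind_sq: "integrable M (\<lambda>\<omega>. (?ind (X 0 1 \<omega>))\<^sup>2)"
      by (rule Bochner_Integration.integrable_bound[of _ "\<lambda>_. 1::real"]) auto
    have "prob B1 \<le> (expectation (\<lambda>\<omega>. (real (D 0 1 \<omega>))\<^sup>2) - mean_D\<^sup>2) / (\<delta>\<^sup>2 * real t)"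
      using prob_partial_sum_deviation_le[where c=0 and h="\<lambda>x. x" and t=t and k=t and \<eta>=\<delta> and n=n]
        D_var assms slack_pos by (simp add: B1_def)
    moreover have "prob B2 \<le> (expectation (\<lambda>\<omega>. (?ind (X 0 1 \<omega>))\<^sup>2) - tail\<^sup>2) / (\<delta>\<^sup>2 * real t)"
      using prob_partial_sum_deviation_le[where c=1 and h="?ind" and t=t and k="lower t" and \<eta>=\<delta> and n=n]
        ind_sq le_lower[of t] assms slack_pos by (simp add: B2_def expectation_indicator_X del: One_nat_def)
    moreover have "prob B3 \<le> (expectation (\<lambda>\<omega>. (?cap (X 0 1 \<omega>))\<^sup>2) - tail_mean\<^sup>2) / (\<delta>\<^sup>2 * real t)"
      using prob_partial_sum_deviation_le[where c=1 and h="?cap" and t=t and k="upper t" and \<eta>=\<delta> and n=n]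
        le_upper[of t] assms slack_pos
        Bochner_Integration.integrable_bound[OF X_var, of "\<lambda>\<omega>. (?cap (X 0 1 \<omega>))\<^sup>2"]
      by (simp add: B3_def cong: if_cong)
    moreover have "prob B4 \<le> (expectation (\<lambda>\<omega>. (R 0 1 \<omega>)\<^sup>2) - mean_R\<^sup>2) / (\<delta>\<^sup>2 * real t)"
      using prob_partial_sum_deviation_le[where c=2 and h="\<lambda>x. x" and t=t and k=t and \<eta>=\<delta> and n=n]
        R_var assms slack_pos by (simp add: B4_def)
    ultimately show ?thesis
      unfolding deviation_bound_def by (simp add: add_divide_distrib)
  qed
  finally show ?thesis .
qed

lemma typical_restrict: "typical n t (restrict v (idx_at n)) = typical n t v"
proof -
  have r: "restrict v (idx_at n) (c, n, j) = v (c, n, j)" if "c \<le> 2" "j \<in> {1..k}" for c j k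
    using that by (auto simp: idx_at_def allidx_def)
  have "(\<Sum>j=1..t. restrict v (idx_at n) (0, n, j)) = (\<Sum>j=1..t. v (0, n, j))"
    "(\<Sum>j=1..t. restrict v (idx_at n) (2, n, j)) = (\<Sum>j=1..t. v (2, n, j))"
    "(\<Sum>i=1..lower t. if \<theta>1 < restrict v (idx_at n) (1, n, i) then 1 else 0)
      = (\<Sum>i=1..lower t. if \<theta>1 < v (1, n, i) then 1 else 0 :: real)"
    "(\<Sum>i=1..upper t. if \<theta>1 < restrict v (idx_at n) (1, n, i) then restrict v (idx_at n) (1, n, i) else 0)
      = (\<Sum>i=1..upper t. if \<theta>1 < v (1, n, i) then v (1, n, i) else 0)"
    by (intro sum.cong refl; simp only: r[of 0] r[of 1] r[of 2]; simp)+
  then show ?thesis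
    unfolding typical_def by (simp only:)
qed

text \<open>Whether generation \<open>n\<close> is typical depends only on its own coordinates, while the states up
  to generation \<open>n\<close> depend only on earlier ones.\<close>

lemma prob_not_typical_indep:
  assumes "n0 \<le> n"
  shows "prob ({\<omega>\<in>space M. sfS D X R n0 \<omega> = j \<and> sfS D X R n \<omega> = t} \<inter> {\<omega>\<in>space M. \<not> typical n t (sample \<omega>)})
    = prob {\<omega>\<in>space M. sfS D X R n0 \<omega> = j \<and> sfS D X R n \<omega> = t} * prob {\<omega>\<in>space M. \<not> typical n t (sample \<omega>)}"
proof -
  note measurable_PiM_coordinate[measurable]
  define past where "past \<omega> = restrict (sample \<omega>) (idx_before n)" for \<omega>
  define present where "present \<omega> = restrict (sample \<omega>) (idx_at n)" for \<omega>
  define Past where "Past = {v \<in> space (PiM (idx_before n) (\<lambda>_. borel)).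
    sfS Dcoord Xcoord Rcoord n0 v = j \<and> sfS Dcoord Xcoord Rcoord n v = t}"
  define Present where "Present = {v \<in> space (PiM (idx_at n) (\<lambda>_. borel)). \<not> typical n t v}"
  have [measurable]: "sfS Dcoord Xcoord Rcoord m \<in> measurable (PiM (idx_before n) (\<lambda>_. borel)) (count_space UNIV)"
    for m by (rule measurable_sfS_coord)
  have "indep_var (PiM (idx_before n) (\<lambda>_. borel)) past (PiM (idx_at n) (\<lambda>_. borel)) present"
    unfolding past_def present_def
    by (rule indep_var_restrict[OF indep]) (auto simp: idx_before_def idx_at_def)
  moreover have "Past \<in> sets (PiM (idx_before n) (\<lambda>_. borel))"
    unfolding Past_def by measurable
  moreover have "Present \<in> sets (PiM (idx_at n) (\<lambda>_. borel))"
    unfolding Present_def typical_def by measurable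
  ultimately have "prob ((\<lambda>\<omega>. (past \<omega>, present \<omega>)) -` (Past \<times> Present) \<inter> space M)
      = prob (past -` Past \<inter> space M) * prob (present -` Present \<inter> space M)"
    by (rule indep_varD)
  moreover have "(\<lambda>\<omega>. (past \<omega>, present \<omega>)) -` (Past \<times> Present) \<inter> space M
      = (past -` Past \<inter> space M) \<inter> (present -` Present \<inter> space M)"
    by auto
  moreover have "past -` Past \<inter> space M = {\<omega>\<in>space M. sfS D X R n0 \<omega> = j \<and> sfS D X R n \<omega> = t}"
    using assms by (auto simp: past_def Past_def space_PiM sfS_eq_sfS_coord[symmetric])
  moreover have "present -` Present \<inter> space M = {\<omega>\<in>space M. \<not> typical n t (sample \<omega>)}"
    by (auto simp: present_def Present_def space_PiM typical_restrict)
  ultimately show ?thesis by (simp only:)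
qed

lemma typical_growth:
  obtains \<kappa> T where "1 < \<kappa>"
    "\<And>n t \<omega>. \<omega> \<in> space M \<Longrightarrow> T \<le> t \<Longrightarrow> typical n t (sample \<omega>) \<Longrightarrow>
      \<kappa> * real t \<le> real (sfM (Dsum D n t \<omega>) (\<lambda>k. X n k \<omega>) (Rsum R n t \<omega>))"
proof -
  define \<rho> where "\<rho> = (mean_D - \<delta>) * (tail - \<delta>)"
  have "1 < \<rho>" using growth_rate by (simp add: \<rho>_def)
  show ?thesis
  proof (rule that[of "(1 + \<rho>) / 2" "nat \<lceil>2 / (\<rho> - 1)\<rceil>"])
    show "1 < (1 + \<rho>) / 2" using \<open>1 < \<rho>\<close> by simp
    fix n t \<omega> assume \<omega>: "\<omega> \<in> space M" and t: "nat \<lceil>2 / (\<rho> - 1)\<rceil> \<le> t"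
      and tp: "typical n t (sample \<omega>)"
    have "2 / (\<rho> - 1) \<le> real t" using t by linarith
    then have "2 \<le> real t * (\<rho> - 1)" using \<open>1 < \<rho>\<close> by (simp add: field_simps)
    then have "(1 + \<rho>) / 2 * real t \<le> real t * \<rho> - 1" by (simp add: algebra_simps) argo
    also have "\<dots> < real (sfM (Dsum D n t \<omega>) (\<lambda>k. X n k \<omega>) (Rsum R n t \<omega>))"
      unfolding \<rho>_def by (rule typical_imp_sfM_gt[OF \<omega> tp])
    finally show "(1 + \<rho>) / 2 * real t \<le> real (sfM (Dsum D n t \<omega>) (\<lambda>k. X n k \<omega>) (Rsum R n t \<omega>))"
      by simp
  qed
qed

lemma rare_failure_growth_typical:
  obtains \<kappa> T where "rare_failure_growth M (sfS D X R)
    (\<lambda>n t. {\<omega>\<in>space M. \<not> typical n t (sample \<omega>)}) deviation_bound \<kappa> T"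
proof -
  obtain \<kappa> T where "1 < \<kappa>" and growth: "\<And>n t \<omega>. \<omega> \<in> space M \<Longrightarrow> T \<le> t \<Longrightarrow> typical n t (sample \<omega>) \<Longrightarrow>
      \<kappa> * real t \<le> real (sfM (Dsum D n t \<omega>) (\<lambda>k. X n k \<omega>) (Rsum R n t \<omega>))"
    by (rule typical_growth) blast
  show ?thesis
  proof (rule that, intro rare_failure_growth.intro prob_space_axioms rare_failure_growth_axioms.intro)
    show "sfS D X R n \<in> measurable M (count_space UNIV)" for n
      by (rule measurable_sfS[OF D_meas X_meas R_meas])
    show "prob {\<omega>\<in>space M. \<not> typical n t (sample \<omega>)} \<le> deviation_bound / real t" if "1 \<le> t" for n t
      using that by (rule prob_not_typical_le)
    show "\<kappa> * real t \<le> real (sfS D X R (Suc n) \<omega>)"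
      if "\<omega> \<in> space M" "sfS D X R n \<omega> = t" "T \<le> t" "\<omega> \<notin> {\<omega>\<in>space M. \<not> typical n t (sample \<omega>)}"
      for n t \<omega>
      using growth[of \<omega> t n] that by simp
  qed (use \<open>1 < \<kappa>\<close> prob_not_typical_indep in simp_all)
qed

end

theorem mainTheorem19:
  fixes M :: "'a measure"
    and D :: "nat \<Rightarrow> nat \<Rightarrow> 'a \<Rightarrow> nat"
    and X R :: "nat \<Rightarrow> nat \<Rightarrow> 'a \<Rightarrow> real"
    and \<theta> :: real
  assumes P: "prob_space M"
    and D_meas: "\<And>n k. D n k \<in> measurable M (count_space UNIV)"
    and X_meas: "\<And>n k. X n k \<in> borel_measurable M"
    and R_meas: "\<And>n k. R n k \<in> borel_measurable M"
    and indep: "prob_space.indep_vars M (\<lambda>_. borel) (allvars D X R) allidx"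
    and D_id: "\<And>n k. k \<ge> 1 \<Longrightarrow>
        distr M (count_space UNIV) (D n k) = distr M (count_space UNIV) (D 0 1)"
    and X_id: "\<And>n k. k \<ge> 1 \<Longrightarrow> distr M borel (X n k) = distr M borel (X 0 1)"
    and R_id: "\<And>n k. k \<ge> 1 \<Longrightarrow> distr M borel (R n k) = distr M borel (R 0 1)"
    and X_nonneg: "\<And>n k \<omega>. \<omega> \<in> space M \<Longrightarrow> X n k \<omega> \<ge> 0"
    and R_nonneg: "\<And>n k \<omega>. \<omega> \<in> space M \<Longrightarrow> R n k \<omega> \<ge> 0"
    and F_cont: "\<And>x. isCont (cdf (distr M borel (X 0 1))) x"
    \<comment> \<open>(A1) and (A4): finite means and finite variances; 1 < m, 0 < mu\<close>
    and D_int: "integrable M (\<lambda>\<omega>. real (D 0 1 \<omega>))"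
    and X_int: "integrable M (X 0 1)"
    and R_int: "integrable M (R 0 1)"
    and D_var: "integrable M (\<lambda>\<omega>. (real (D 0 1 \<omega>))\<^sup>2)"
    and X_var: "integrable M (\<lambda>\<omega>. (X 0 1 \<omega>)\<^sup>2)"
    and R_var: "integrable M (\<lambda>\<omega>. (R 0 1 \<omega>)\<^sup>2)"
    and m_gt1: "(\<integral>\<omega>. real (D 0 1 \<omega>) \<partial>M) > 1"
    and mu_pos: "(\<integral>\<omega>. X 0 1 \<omega> \<partial>M) > 0"
    \<comment> \<open>(A2)\<close>
    and p0_pos: "measure M {\<omega> \<in> space M. D 0 1 \<omega> = 0} > 0"
    and pk_pos: "\<exists>k\<ge>2. measure M {\<omega> \<in> space M. D 0 1 \<omega> = k} > 0"
    \<comment> \<open>(A3)\<close>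
    and A3: "\<And>j. j \<ge> 1 \<Longrightarrow> \<exists>n. measure M {\<omega> \<in> space M. sfS D X R n \<omega> = j} > 0"
    and X_bdd: "\<exists>B. \<forall>n k. \<forall>\<omega>\<in>space M. X n k \<omega> \<le> B"
    and r_le: "(\<integral>\<omega>. R 0 1 \<omega> \<partial>M) \<le> (\<integral>\<omega>. real (D 0 1 \<omega>) \<partial>M) * (\<integral>\<omega>. X 0 1 \<omega> \<partial>M)"
    and theta: "(LINT x : {\<theta>..Sup (cdf_support (cdf (distr M borel (X 0 1)))) } | distr M borel (X 0 1). x)
        = (\<integral>\<omega>. R 0 1 \<omega> \<partial>M) / (\<integral>\<omega>. real (D 0 1 \<omega>) \<partial>M)"
    and stoch_mono: "\<exists>t0. \<forall>t\<ge>t0. \<forall>v::real. v \<ge> 0 \<longrightarrow>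
        measure M {\<omega> \<in> space M. real (sfM (Dsum D 0 t \<omega>) (\<lambda>k. X 0 k \<omega>) (Rsum R 0 t \<omega>)) \<ge> v}
        \<le> measure M {\<omega> \<in> space M.
              real (sfM (Dsum D 0 (t+1) \<omega>) (\<lambda>k. X 0 k \<omega>) (Rsum R 0 (t+1) \<omega>)) \<ge> v}"
    and supercrit: "(\<integral>\<omega>. real (D 0 1 \<omega>) \<partial>M) * (1 - cdf (distr M borel (X 0 1)) \<theta>) > 1"
  shows "measure M {\<omega> \<in> space M. (\<lambda>n. real (sfS D X R n \<omega>)) \<longlonglongrightarrow> 0} < 1"
proof -
  interpret sf_process M D X R \<theta>
    by (intro sf_process.intro sf_process_axioms.intro P)
      (fact D_meas X_meas R_meas indep D_id X_id R_id X_nonneg F_cont D_var X_var R_var m_gt1 X_bdd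
        theta supercrit)+
  obtain \<theta>1 \<delta> where "sf_thresholds M D X R \<theta> \<theta>1 \<delta>"
    using sf_thresholds_exist by blast
  then interpret sf_thresholds M D X R \<theta> \<theta>1 \<delta> .
  obtain \<kappa> T where "rare_failure_growth M (sfS D X R)
      (\<lambda>n t. {\<omega>\<in>space M. \<not> typical n t (sample \<omega>)}) deviation_bound \<kappa> T"
    by (rule rare_failure_growth_typical)
  then show ?thesis
    using A3 by (rule rare_failure_growth.prob_extinction_lt_1)
qed

end
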